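(* Let $M$ and $N$ be MV-algebras and let $p\colon M\to N$ be a function with $p(0)=0$ and $p(1)=1$. The following are equivalent: (1) $p$ is a probability map; (2) $p(a\oplus b)=p(a)+p(b)-p(a\odot b)$ for all $a,b\in M$, where $+$ and $-$ are the operations of the enveloping unital $\ell$-group $\Xi(N)$ of $N$; (3) for all $a,b\in M$, if $a\odot b=0$, then $p(a\oplus b)=p(a)\oplus p(b)$ and $p(a)\odot p(b)=0$; (4) for all $a,b\in M$, if $a\odot b=0$, then $p(a\oplus b)=p(a)+p(b)$ (sum computed in $\Xi(N)$).
   Context: For an MV-algebra $(M,\oplus,\neg,0)$: $1\coloneqq\neg 0$, $a\odot b\coloneqq\neg(\neg a\oplus\neg b)$, $a\vee b\coloneqq\neg(\neg a\oplus b)\oplus b$, $a\wedge b\coloneqq\neg(\neg a\vee\neg b)$. A probability map is a function $p\colon M\to N$ between MV-algebras such that for all $a,b\in M$: (P1) $p(a\oplus b)=p(a)\oplus p(b\wedge\neg a)$; (P2) $p(\neg a)=\neg p(a)$; (P3) $p(1)=1$. By Mundici's $\Gamma$-functor theory every MV-algebra $N$ is isomorphic to the unit interval $\Gamma(G,u)=[0,u]$ of a unique unital lattice-ordered Abelian group $(G,u)$ with $a\oplus b=(a+b)\wedge u$, $\neg a=u-a$; this $G$ is denoted $\Xi(N)$ (the enveloping unital $\ell$-group), and $N$ is identified with $[0,u]\subseteq\Xi(N)$. *)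

theory Defs
  imports Main "HOL-Library.Lattice_Algebras"
begin

definition mv_algebra :: "'a set \<Rightarrow> ('a \<Rightarrow> 'a \<Rightarrow> 'a) \<Rightarrow> ('a \<Rightarrow> 'a) \<Rightarrow> 'a \<Rightarrow> bool" where
  "mv_algebra A pl ng z \<longleftrightarrow>
     z \<in> A \<and>
     (\<forall>x\<in>A. \<forall>y\<in>A. pl x y \<in> A) \<and>
     (\<forall>x\<in>A. ng x \<in> A) \<and>
     (\<forall>x\<in>A. \<forall>y\<in>A. \<forall>w\<in>A. pl x (pl y w) = pl (pl x y) w) \<and>
     (\<forall>x\<in>A. \<forall>y\<in>A. pl x y = pl y x) \<and>
     (\<forall>x\<in>A. pl x z = x) \<and>
     (\<forall>x\<in>A. ng (ng x) = x) \<and>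
     (\<forall>x\<in>A. pl x (ng z) = ng z) \<and>
     (\<forall>x\<in>A. \<forall>y\<in>A. pl (ng (pl (ng x) y)) y = pl (ng (pl (ng y) x)) x)"

definition mv_one :: "('a \<Rightarrow> 'a) \<Rightarrow> 'a \<Rightarrow> 'a" where
  "mv_one ng z = ng z"

definition mv_odot :: "('a \<Rightarrow> 'a \<Rightarrow> 'a) \<Rightarrow> ('a \<Rightarrow> 'a) \<Rightarrow> 'a \<Rightarrow> 'a \<Rightarrow> 'a" where
  "mv_odot pl ng a b = ng (pl (ng a) (ng b))"

definition mv_sup :: "('a \<Rightarrow> 'a \<Rightarrow> 'a) \<Rightarrow> ('a \<Rightarrow> 'a) \<Rightarrow> 'a \<Rightarrow> 'a \<Rightarrow> 'a" where
  "mv_sup pl ng a b = pl (ng (pl (ng a) b)) b"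

definition mv_inf :: "('a \<Rightarrow> 'a \<Rightarrow> 'a) \<Rightarrow> ('a \<Rightarrow> 'a) \<Rightarrow> 'a \<Rightarrow> 'a \<Rightarrow> 'a" where
  "mv_inf pl ng a b = ng (mv_sup pl ng (ng a) (ng b))"

text \<open>Probability map p : M \<rightarrow> N (axioms P1--P3), M = (A,plA,ngA,zA), N = (B,plB,ngB,zB).\<close>
definition probability_map ::
  "'a set \<Rightarrow> ('a \<Rightarrow> 'a \<Rightarrow> 'a) \<Rightarrow> ('a \<Rightarrow> 'a) \<Rightarrow> 'a \<Rightarrow>
   'b set \<Rightarrow> ('b \<Rightarrow> 'b \<Rightarrow> 'b) \<Rightarrow> ('b \<Rightarrow> 'b) \<Rightarrow> 'b \<Rightarrow> ('a \<Rightarrow> 'b) \<Rightarrow> bool" where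
  "probability_map A plA ngA zA B plB ngB zB p \<longleftrightarrow>
     (\<forall>a\<in>A. p a \<in> B) \<and>
     (\<forall>a\<in>A. \<forall>b\<in>A. p (plA a b) = plB (p a) (p (mv_inf plA ngA b (ngA a)))) \<and>
     (\<forall>a\<in>A. p (ngA a) = ngB (p a)) \<and>
     p (mv_one ngA zA) = mv_one ngB zB"

definition strong_unit :: "'g::lattice_ab_group_add \<Rightarrow> bool" where
  "strong_unit u \<longleftrightarrow> 0 \<le> u \<and> (\<forall>x::'g. \<exists>n::nat. x \<le> (\<Sum>i<n. u))"

text \<open>\<iota> is an isomorphism of the MV-algebra (B,pl,ng,z) onto \<Gamma>(G,u) = [0,u] with
  a \<oplus> b = (a+b) \<sqinter> u and \<not>a = u - a.\<close>
definition gamma_iso ::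
  "'b set \<Rightarrow> ('b \<Rightarrow> 'b \<Rightarrow> 'b) \<Rightarrow> ('b \<Rightarrow> 'b) \<Rightarrow> 'b \<Rightarrow> 'g::lattice_ab_group_add \<Rightarrow> ('b \<Rightarrow> 'g) \<Rightarrow> bool" where
  "gamma_iso B pl ng z u \<iota> \<longleftrightarrow>
     bij_betw \<iota> B {0..u} \<and>
     \<iota> z = 0 \<and>
     (\<forall>x\<in>B. \<forall>y\<in>B. \<iota> (pl x y) = inf (\<iota> x + \<iota> y) u) \<and>
     (\<forall>x\<in>B. \<iota> (ng x) = u - \<iota> x)"

end

theory Submission imports Defs begin

text \<open>Everything reduces to (4). Inside \<open>M\<close>, \<open>a \<oplus> b\<close> is the orthogonal sum of \<open>a\<close> and
  \<open>b \<and> \<not>a\<close>, and \<open>b\<close> is the orthogonal sum of \<open>a \<odot> b\<close> and \<open>b \<and> \<not>a\<close>; so additivity on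
  orthogonal pairs gives both (P1) and the inclusion-exclusion identity (2). Conversely a
  probability map is monotone, hence \<open>p a + p b \<le> p a + p (\<not>a) = u\<close> for orthogonal \<open>a, b\<close>, and
  the truncation in \<open>\<oplus>\<close> of \<open>\<Gamma>(G,u)\<close> disappears. In \<open>\<Gamma>(G,u)\<close>, \<open>x \<odot> y = 0\<close> says exactly
  \<open>x + y \<le> u\<close>, which links (3) and (4).\<close>

locale mv_alg =
  fixes A :: "'a set" and pl :: "'a \<Rightarrow> 'a \<Rightarrow> 'a" and ng :: "'a \<Rightarrow> 'a" and z :: 'a
  assumes mv: "mv_algebra A pl ng z"
begin

lemma zero_closed: "z \<in> A"
  and plus_closed: "x \<in> A \<Longrightarrow> y \<in> A \<Longrightarrow> pl x y \<in> A"
  and neg_closed: "x \<in> A \<Longrightarrow> ng x \<in> A"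
  and plus_assoc: "x \<in> A \<Longrightarrow> y \<in> A \<Longrightarrow> w \<in> A \<Longrightarrow> pl x (pl y w) = pl (pl x y) w"
  and plus_commute: "x \<in> A \<Longrightarrow> y \<in> A \<Longrightarrow> pl x y = pl y x"
  and plus_zero: "x \<in> A \<Longrightarrow> pl x z = x"
  and neg_neg: "x \<in> A \<Longrightarrow> ng (ng x) = x"
  and plus_one: "x \<in> A \<Longrightarrow> pl x (ng z) = ng z"
  and mv_swap: "x \<in> A \<Longrightarrow> y \<in> A \<Longrightarrow> pl (ng (pl (ng x) y)) y = pl (ng (pl (ng y) x)) x"
  using mv unfolding mv_algebra_def by blast+

lemma zero_plus: "x \<in> A \<Longrightarrow> pl z x = x"
  using plus_commute plus_zero zero_closed by metis

lemma one_plus: "x \<in> A \<Longrightarrow> pl (ng z) x = ng z"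
  using plus_commute plus_one zero_closed neg_closed by metis

lemma neg_plus_self: "x \<in> A \<Longrightarrow> pl (ng x) x = ng z"
proof -
  assume x: "x \<in> A"
  have "pl (ng (pl (ng x) (ng z))) (ng z) = pl (ng (pl (ng (ng z)) x)) x"
    using mv_swap[OF x neg_closed[OF zero_closed]] .
  thus ?thesis using x zero_closed neg_closed plus_one neg_neg zero_plus by metis
qed

lemma plus_neg_self: "x \<in> A \<Longrightarrow> pl x (ng x) = ng z"
  using neg_plus_self plus_commute neg_closed by metis

lemma odot_closed: "x \<in> A \<Longrightarrow> y \<in> A \<Longrightarrow> mv_odot pl ng x y \<in> A"
  unfolding mv_odot_def using neg_closed plus_closed by simp

lemma neg_plus_neg_if_odot_zero:
  "x \<in> A \<Longrightarrow> y \<in> A \<Longrightarrow> mv_odot pl ng x y = z \<Longrightarrow> pl (ng x) (ng y) = ng z"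
  unfolding mv_odot_def by (metis neg_neg plus_closed neg_closed)

lemma odot_neg_plus: "x \<in> A \<Longrightarrow> y \<in> A \<Longrightarrow> mv_odot pl ng x (ng (pl x y)) = z"
proof -
  assume x: "x \<in> A" and y: "y \<in> A"
  have "pl (ng x) (pl x y) = ng z"
    using plus_assoc[OF neg_closed[OF x] x y] neg_plus_self[OF x] one_plus[OF y] by simp
  thus ?thesis unfolding mv_odot_def using neg_neg x y plus_closed zero_closed by metis
qed

lemma inf_neg_eq: "a \<in> A \<Longrightarrow> b \<in> A \<Longrightarrow> mv_inf pl ng b (ng a) = ng (pl (ng (pl b a)) a)"
  unfolding mv_inf_def mv_sup_def by (simp add: neg_neg)

lemma inf_neg_closed: "a \<in> A \<Longrightarrow> b \<in> A \<Longrightarrow> mv_inf pl ng b (ng a) \<in> A"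
  using inf_neg_eq plus_closed neg_closed by simp

lemma plus_inf_neg: "a \<in> A \<Longrightarrow> b \<in> A \<Longrightarrow> pl a (mv_inf pl ng b (ng a)) = pl a b"
proof -
  assume a: "a \<in> A" and b: "b \<in> A"
  have ba: "pl b a \<in> A" using a b plus_closed by simp
  have "pl (ng (pl (ng (pl b a)) a)) a = pl (ng (pl (ng a) (pl b a))) (pl b a)"
    using mv_swap[OF ba a] .
  also have "pl (ng a) (pl b a) = ng z"
    using a b plus_assoc plus_commute neg_plus_self one_plus neg_closed by metis
  finally have "pl (ng (pl (ng (pl b a)) a)) a = pl b a"
    using neg_neg zero_closed zero_plus ba by simp
  thus ?thesis using inf_neg_eq[OF a b] plus_commute a b neg_closed plus_closed by metis
qed

lemma odot_inf_neg: "a \<in> A \<Longrightarrow> b \<in> A \<Longrightarrow> mv_odot pl ng a (mv_inf pl ng b (ng a)) = z"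
  using inf_neg_eq odot_neg_plus plus_commute neg_closed plus_closed by metis

lemma inf_neg_eq_self_if_odot_zero:
  "a \<in> A \<Longrightarrow> b \<in> A \<Longrightarrow> mv_odot pl ng a b = z \<Longrightarrow> mv_inf pl ng b (ng a) = b"
proof -
  assume a: "a \<in> A" and b: "b \<in> A" and ab: "mv_odot pl ng a b = z"
  have "pl (ng (pl (ng (ng b)) a)) a = pl (ng (pl (ng a) (ng b))) (ng b)"
    using mv_swap[OF neg_closed[OF b] a] .
  also have "\<dots> = ng b"
    using neg_plus_neg_if_odot_zero[OF a b ab] neg_neg zero_closed zero_plus neg_closed b by simp
  finally have "pl (ng (pl b a)) a = ng b" using neg_neg b by simp
  thus ?thesis using inf_neg_eq[OF a b] neg_neg b by simp
qed

text \<open>Here \<open>\<not>b \<oplus> x = 1\<close> means \<open>b \<le> x\<close>, and \<open>\<not>(b \<oplus> \<not>x)\<close> is the difference \<open>x \<ominus> b\<close>.\<close>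

lemma eq_plus_diff_if_le: "b \<in> A \<Longrightarrow> x \<in> A \<Longrightarrow> pl (ng b) x = ng z \<Longrightarrow> x = pl b (ng (pl b (ng x)))"
proof -
  assume b: "b \<in> A" and x: "x \<in> A" and le: "pl (ng b) x = ng z"
  have "pl (ng (pl (ng x) b)) b = pl (ng (pl (ng b) x)) x" using mv_swap[OF x b] .
  also have "\<dots> = x" using le neg_neg zero_closed zero_plus x by simp
  finally show ?thesis using plus_commute b x neg_closed plus_closed by metis
qed

lemma odot_le_right: "a \<in> A \<Longrightarrow> b \<in> A \<Longrightarrow> pl (ng (mv_odot pl ng a b)) b = ng z"
  unfolding mv_odot_def using neg_neg plus_assoc neg_plus_self one_plus neg_closed plus_closed
  by metis

lemma inf_neg_eq_diff_odot:
  "a \<in> A \<Longrightarrow> b \<in> A \<Longrightarrow> mv_inf pl ng b (ng a) = ng (pl (mv_odot pl ng a b) (ng b))"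
proof -
  assume a: "a \<in> A" and b: "b \<in> A"
  have "pl (ng (pl (ng a) (ng b))) (ng b) = pl (ng (pl (ng (ng b)) a)) a"
    using mv_swap[OF a neg_closed[OF b]] .
  thus ?thesis unfolding mv_odot_def using inf_neg_eq[OF a b] neg_neg b by simp
qed

end

lemma gamma_neg_plus_neg_eq_zero_iff:
  fixes u x y :: "'g::lattice_ab_group_add"
  shows "u - inf ((u - x) + (u - y)) u = 0 \<longleftrightarrow> x + y \<le> u"
proof -
  have "u - inf ((u - x) + (u - y)) u = 0 \<longleftrightarrow> u \<le> (u - x) + (u - y)"
    by (metis diff_eq_diff_eq diff_self inf.absorb_iff2)
  also have "\<dots> \<longleftrightarrow> x + y \<le> u" by (simp add: algebra_simps)
  finally show ?thesis .
qed

locale gamma_mv = mv_alg B pl ng z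
  for B :: "'b set" and pl ng z +
  fixes u :: "'g::lattice_ab_group_add" and \<iota> :: "'b \<Rightarrow> 'g"
  assumes iso: "gamma_iso B pl ng z u \<iota>"
begin

lemma emb_range: "x \<in> B \<Longrightarrow> 0 \<le> \<iota> x \<and> \<iota> x \<le> u"
  using iso unfolding gamma_iso_def bij_betw_def by auto

lemma emb_inject: "x \<in> B \<Longrightarrow> y \<in> B \<Longrightarrow> \<iota> x = \<iota> y \<Longrightarrow> x = y"
  using iso unfolding gamma_iso_def bij_betw_def inj_on_def by blast

lemma emb_plus: "x \<in> B \<Longrightarrow> y \<in> B \<Longrightarrow> \<iota> (pl x y) = inf (\<iota> x + \<iota> y) u"
  and emb_neg: "x \<in> B \<Longrightarrow> \<iota> (ng x) = u - \<iota> x"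
  and emb_zero: "\<iota> z = 0"
  using iso unfolding gamma_iso_def by blast+

lemma emb_one: "\<iota> (mv_one ng z) = u"
  using emb_neg[OF zero_closed] emb_zero unfolding mv_one_def by simp

lemma emb_odot: "x \<in> B \<Longrightarrow> y \<in> B \<Longrightarrow> \<iota> (mv_odot pl ng x y) = u - inf ((u - \<iota> x) + (u - \<iota> y)) u"
  unfolding mv_odot_def using emb_neg emb_plus neg_closed plus_closed by simp

lemma plus_eq_if_sum_le:
  "x \<in> B \<Longrightarrow> y \<in> B \<Longrightarrow> \<iota> x + \<iota> y \<le> u \<Longrightarrow> \<iota> (pl x y) = \<iota> x + \<iota> y"
  using emb_plus by (simp add: inf_absorb1)

lemma odot_eq_zero_iff_sum_le:
  "x \<in> B \<Longrightarrow> y \<in> B \<Longrightarrow> mv_odot pl ng x y = z \<longleftrightarrow> \<iota> x + \<iota> y \<le> u"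
  using emb_odot emb_inject emb_zero odot_closed zero_closed gamma_neg_plus_neg_eq_zero_iff
  by metis

end

definition orthogonally_additive ::
  "'a set \<Rightarrow> ('a \<Rightarrow> 'a \<Rightarrow> 'a) \<Rightarrow> ('a \<Rightarrow> 'a) \<Rightarrow> 'a \<Rightarrow> ('a \<Rightarrow> 'g::ab_group_add) \<Rightarrow> bool" where
  "orthogonally_additive A pl ng z f \<longleftrightarrow>
     (\<forall>a\<in>A. \<forall>b\<in>A. mv_odot pl ng a b = z \<longrightarrow> f (pl a b) = f a + f b)"

locale mv_map_into_gamma = M: mv_alg A plA ngA zA + N: gamma_mv B plB ngB zB u \<iota>
  for A :: "'a set" and plA ngA zA and B :: "'b set" and plB ngB zB
    and u :: "'g::lattice_ab_group_add" and \<iota> +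
  fixes p :: "'a \<Rightarrow> 'b"
  assumes maps: "\<forall>a\<in>A. p a \<in> B"
    and map_one: "p (mv_one ngA zA) = mv_one ngB zB"
begin

abbreviation "is_prob_map \<equiv> probability_map A plA ngA zA B plB ngB zB p"

abbreviation "orth_additive \<equiv> orthogonally_additive A plA ngA zA (\<iota> \<circ> p)"

lemma map_closed: "a \<in> A \<Longrightarrow> p a \<in> B"
  using maps by blast

lemma orth_additiveD:
  "orth_additive \<Longrightarrow> a \<in> A \<Longrightarrow> b \<in> A \<Longrightarrow> mv_odot plA ngA a b = zA \<Longrightarrow>
    \<iota> (p (plA a b)) = \<iota> (p a) + \<iota> (p b)"
  unfolding orthogonally_additive_def by simp

lemma orth_additive_plus:
  assumes add: orth_additive and a: "a \<in> A" and b: "b \<in> A"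
  shows "\<iota> (p (plA a b)) = \<iota> (p a) + \<iota> (p (mv_inf plA ngA b (ngA a)))"
  using M.plus_inf_neg[OF a b] orth_additiveD[OF add a M.inf_neg_closed[OF a b] M.odot_inf_neg[OF a b]]
  by simp

lemma probability_map_mono:
  assumes is_prob_map and b: "b \<in> A" and x: "x \<in> A" and le: "plA (ngA b) x = ngA zA"
  shows "\<iota> (p b) \<le> \<iota> (p x)"
proof -
  define w where "w = ngA (plA b (ngA x))"
  have w: "w \<in> A" unfolding w_def using b x M.neg_closed M.plus_closed by simp
  have "p x = plB (p b) (p (mv_inf plA ngA w (ngA b)))"
    using M.eq_plus_diff_if_le[OF b x le] \<open>is_prob_map\<close> b w
    unfolding w_def probability_map_def by metis
  then have "\<iota> (p x) = inf (\<iota> (p b) + \<iota> (p (mv_inf plA ngA w (ngA b)))) u"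
    using N.emb_plus map_closed b M.inf_neg_closed[OF b w] by simp
  then show ?thesis
    using N.emb_range map_closed b M.inf_neg_closed[OF b w] by (simp add: add_increasing2)
qed

lemma probability_map_imp_orth_additive: "is_prob_map \<Longrightarrow> orth_additive"
  unfolding orthogonally_additive_def
proof (intro ballI impI)
  fix a b assume is_prob_map and a: "a \<in> A" and b: "b \<in> A" and ab: "mv_odot plA ngA a b = zA"
  have neg: "\<iota> (p (ngA a)) = u - \<iota> (p a)"
    using \<open>is_prob_map\<close> a N.emb_neg map_closed unfolding probability_map_def by simp
  have "plA (ngA b) (ngA a) = ngA zA"
    using M.neg_plus_neg_if_odot_zero[OF a b ab] M.plus_commute M.neg_closed a b by metis
  then have "\<iota> (p b) \<le> u - \<iota> (p a)"
    using probability_map_mono[OF \<open>is_prob_map\<close> b M.neg_closed[OF a]] neg by simp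
  then have "\<iota> (p a) + \<iota> (p b) \<le> u" by (simp add: le_diff_eq add.commute)
  moreover have "p (plA a b) = plB (p a) (p b)"
    using \<open>is_prob_map\<close> a b M.inf_neg_eq_self_if_odot_zero[OF a b ab]
    unfolding probability_map_def by metis
  ultimately show "(\<iota> \<circ> p) (plA a b) = (\<iota> \<circ> p) a + (\<iota> \<circ> p) b"
    using N.plus_eq_if_sum_le map_closed a b by simp
qed

lemma orth_additive_imp_probability_map:
  assumes add: orth_additive
  shows is_prob_map
proof -
  have "p (ngA a) = ngB (p a)" if a: "a \<in> A" for a
  proof -
    have "mv_odot plA ngA a (ngA a) = zA"
      using M.odot_neg_plus[OF a M.zero_closed] M.plus_zero a by simp
    then have "\<iota> (p (plA a (ngA a))) = \<iota> (p a) + \<iota> (p (ngA a))"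
      using orth_additiveD[OF add] a M.neg_closed by blast
    moreover have "\<iota> (p (plA a (ngA a))) = u"
      using M.plus_neg_self[OF a] map_one N.emb_one unfolding mv_one_def by simp
    ultimately have "\<iota> (p (ngA a)) = u - \<iota> (p a)" by (simp add: algebra_simps)
    then have "\<iota> (p (ngA a)) = \<iota> (ngB (p a))" using N.emb_neg map_closed a by simp
    then show ?thesis using N.emb_inject map_closed a M.neg_closed N.neg_closed by blast
  qed
  moreover have "p (plA a b) = plB (p a) (p (mv_inf plA ngA b (ngA a)))"
    if a: "a \<in> A" and b: "b \<in> A" for a b
  proof -
    let ?c = "mv_inf plA ngA b (ngA a)"
    have c: "?c \<in> A" using M.inf_neg_closed a b by simp
    have sum: "\<iota> (p (plA a b)) = \<iota> (p a) + \<iota> (p ?c)" using orth_additive_plus[OF add a b] .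
    then have "\<iota> (p a) + \<iota> (p ?c) \<le> u"
      using N.emb_range map_closed M.plus_closed a b by metis
    then have "\<iota> (plB (p a) (p ?c)) = \<iota> (p (plA a b))"
      using sum N.plus_eq_if_sum_le map_closed a c by simp
    then show ?thesis using N.emb_inject map_closed a b c M.plus_closed N.plus_closed by metis
  qed
  ultimately show ?thesis unfolding probability_map_def using map_one maps by blast
qed

lemma probability_map_iff_orth_additive: "is_prob_map \<longleftrightarrow> orth_additive"
  using probability_map_imp_orth_additive orth_additive_imp_probability_map by blast

lemma orth_additive_imp_inclusion_exclusion:
  assumes add: orth_additive and a: "a \<in> A" and b: "b \<in> A"
  shows "\<iota> (p (plA a b)) = \<iota> (p a) + \<iota> (p b) - \<iota> (p (mv_odot plA ngA a b))"
proof -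
  define c where "c = mv_inf plA ngA b (ngA a)"
  define d where "d = mv_odot plA ngA a b"
  have c: "c \<in> A" and d: "d \<in> A"
    unfolding c_def d_def using M.inf_neg_closed M.odot_closed a b by simp_all
  have c_eq: "c = ngA (plA d (ngA b))"
    unfolding c_def d_def using M.inf_neg_eq_diff_odot a b by simp
  have "b = plA d c"
    unfolding c_eq using M.eq_plus_diff_if_le[OF d b] M.odot_le_right a b unfolding d_def by simp
  then have "\<iota> (p b) = \<iota> (p d) + \<iota> (p c)"
    using orth_additiveD[OF add d c] M.odot_neg_plus[OF d M.neg_closed[OF b]] unfolding c_eq by metis
  then show ?thesis
    using orth_additive_plus[OF add a b] unfolding c_def d_def by (simp add: algebra_simps)
qed

lemma inclusion_exclusion_imp_orth_additive:
  assumes "p zA = zB"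
    and "\<forall>a\<in>A. \<forall>b\<in>A. \<iota> (p (plA a b)) = \<iota> (p a) + \<iota> (p b) - \<iota> (p (mv_odot plA ngA a b))"
  shows orth_additive
  unfolding orthogonally_additive_def using assms N.emb_zero by simp

lemma orth_additive_iff_orthogonal_plus:
  "orth_additive \<longleftrightarrow> (\<forall>a\<in>A. \<forall>b\<in>A. mv_odot plA ngA a b = zA \<longrightarrow>
     p (plA a b) = plB (p a) (p b) \<and> mv_odot plB ngB (p a) (p b) = zB)"
proof (intro iffI ballI impI)
  fix a b assume add: orth_additive and a: "a \<in> A" and b: "b \<in> A" and ab: "mv_odot plA ngA a b = zA"
  have sum: "\<iota> (p (plA a b)) = \<iota> (p a) + \<iota> (p b)" using orth_additiveD[OF add a b ab] .
  then have le: "\<iota> (p a) + \<iota> (p b) \<le> u"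
    using N.emb_range map_closed M.plus_closed a b by metis
  then have "\<iota> (plB (p a) (p b)) = \<iota> (p (plA a b))"
    using sum N.plus_eq_if_sum_le map_closed a b by simp
  then show "p (plA a b) = plB (p a) (p b) \<and> mv_odot plB ngB (p a) (p b) = zB"
    using N.emb_inject N.odot_eq_zero_iff_sum_le le map_closed a b M.plus_closed N.plus_closed
    by metis
next
  assume orth: "\<forall>a\<in>A. \<forall>b\<in>A. mv_odot plA ngA a b = zA \<longrightarrow>
     p (plA a b) = plB (p a) (p b) \<and> mv_odot plB ngB (p a) (p b) = zB"
  show orth_additive
    unfolding orthogonally_additive_def
    using orth N.odot_eq_zero_iff_sum_le N.plus_eq_if_sum_le map_closed by simp
qed

end

theorem proposition3p3:
  fixes A :: "'a set" and plA :: "'a \<Rightarrow> 'a \<Rightarrow> 'a" and ngA :: "'a \<Rightarrow> 'a" and zA :: 'a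
    and B :: "'b set" and plB :: "'b \<Rightarrow> 'b \<Rightarrow> 'b" and ngB :: "'b \<Rightarrow> 'b" and zB :: 'b
    and u :: "'g::lattice_ab_group_add" and \<iota> :: "'b \<Rightarrow> 'g"
    and p :: "'a \<Rightarrow> 'b"
  assumes M: "mv_algebra A plA ngA zA"
    and N: "mv_algebra B plB ngB zB"
    and unit: "strong_unit u"
    and iso: "gamma_iso B plB ngB zB u \<iota>"
    and p_maps: "\<forall>a\<in>A. p a \<in> B"
    and p0: "p zA = zB"
    and p1: "p (mv_one ngA zA) = mv_one ngB zB"
  shows
    "(probability_map A plA ngA zA B plB ngB zB p
        \<longleftrightarrow> (\<forall>a\<in>A. \<forall>b\<in>A. \<iota> (p (plA a b)) = \<iota> (p a) + \<iota> (p b) - \<iota> (p (mv_odot plA ngA a b))))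
   \<and> (probability_map A plA ngA zA B plB ngB zB p
        \<longleftrightarrow> (\<forall>a\<in>A. \<forall>b\<in>A. mv_odot plA ngA a b = zA \<longrightarrow>
               p (plA a b) = plB (p a) (p b) \<and> mv_odot plB ngB (p a) (p b) = zB))
   \<and> (probability_map A plA ngA zA B plB ngB zB p
        \<longleftrightarrow> (\<forall>a\<in>A. \<forall>b\<in>A. mv_odot plA ngA a b = zA \<longrightarrow>
               \<iota> (p (plA a b)) = \<iota> (p a) + \<iota> (p b)))"
proof -
  interpret mv_map_into_gamma A plA ngA zA B plB ngB zB u \<iota> p
    using M N iso p_maps p1 by unfold_locales
  have "orth_additive \<longleftrightarrow>
      (\<forall>a\<in>A. \<forall>b\<in>A. \<iota> (p (plA a b)) = \<iota> (p a) + \<iota> (p b) - \<iota> (p (mv_odot plA ngA a b)))"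
    using orth_additive_imp_inclusion_exclusion inclusion_exclusion_imp_orth_additive[OF p0] by blast
  then show ?thesis
    unfolding probability_map_iff_orth_additive orth_additive_iff_orthogonal_plus[symmetric]
    by (simp add: orthogonally_additive_def)
qed

end
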